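(* For every real number $\alpha$, the space $Z_\alpha$ is Cartesian, i.e. $Z_\alpha$ is isomorphic (via a bijective bounded linear map with bounded inverse) to its Cartesian square $Z_\alpha \oplus Z_\alpha$.
   Context: Fix $\alpha\in\mathbb{R}$ and let $f_\alpha(t):=t^{1+i\alpha}$ for $0\le t<\infty$. For a sequence $x=(\xi_k)\in \ell_2$ (complex-valued) define the sequence $\Omega_\alpha(x)$ by $(\Omega_\alpha(x))_k:=\xi_k f_\alpha\left(\log \frac{\|x\|_2}{|\xi_k|}\right)$ if $\xi_k\neq 0$ and $(\Omega_\alpha(x))_k:=0$ otherwise. Let $Z_\alpha$ be the space of all pairs $(x,y)$ of complex-valued sequences with $x\in\ell_2$ such that $\|(x,y)\|_\alpha:=\|x\|_2+\|y-\Omega_\alpha(x)\|_2<\infty$. (It is known, by Kalton, that $\|\cdot\|_\alpha$ is a quasi-norm on $Z_\alpha$ equivalent to a norm under which $Z_\alpha$ is a complex Banach space.) A Banach space $X$ is called Cartesian if it is isomorphic to $X\oplus X$. *)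

theory Defs
  imports "HOL-Analysis.Analysis"
begin

type_synonym cseq = "nat \<Rightarrow> complex"

definition in_l2 :: "cseq \<Rightarrow> bool" where
  "in_l2 x \<longleftrightarrow> summable (\<lambda>k. (cmod (x k))^2)"

definition l2norm :: "cseq \<Rightarrow> real" where
  "l2norm x = sqrt (\<Sum>k. (cmod (x k))^2)"

text \<open>f_alpha(t) = t^(1 + i alpha) for t >= 0 (complex power, with 0 powr w = 0).\<close>
definition f_alpha :: "real \<Rightarrow> real \<Rightarrow> complex" where
  "f_alpha \<alpha> t = (complex_of_real t) powr (1 + \<i> * complex_of_real \<alpha>)"

definition Omega :: "real \<Rightarrow> cseq \<Rightarrow> cseq" where
  "Omega \<alpha> x = (\<lambda>k. if x k = 0 then 0
       else x k * f_alpha \<alpha> (ln (l2norm x / cmod (x k))))"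

definition Zspace :: "real \<Rightarrow> (cseq \<times> cseq) set" where
  "Zspace \<alpha> = {(x, y). in_l2 x \<and> in_l2 (\<lambda>k. y k - Omega \<alpha> x k)}"

definition Znorm :: "real \<Rightarrow> cseq \<times> cseq \<Rightarrow> real" where
  "Znorm \<alpha> z = l2norm (fst z) + l2norm (\<lambda>k. snd z k - Omega \<alpha> (fst z) k)"

definition zadd :: "cseq \<times> cseq \<Rightarrow> cseq \<times> cseq \<Rightarrow> cseq \<times> cseq" where
  "zadd z w = ((\<lambda>k. fst z k + fst w k), (\<lambda>k. snd z k + snd w k))"

definition zscale :: "complex \<Rightarrow> cseq \<times> cseq \<Rightarrow> cseq \<times> cseq" where
  "zscale c z = ((\<lambda>k. c * fst z k), (\<lambda>k. c * snd z k))"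

text \<open>Boundedness w.r.t. the quasi-norms is
  the same as boundedness w.r.t. the equivalent norms.\<close>
definition Z_cartesian :: "real \<Rightarrow> bool" where
  "Z_cartesian \<alpha> \<longleftrightarrow>
    (\<exists>T S. (\<forall>z\<in>Zspace \<alpha>. T z \<in> Zspace \<alpha> \<times> Zspace \<alpha>)
      \<and> (\<forall>p\<in>Zspace \<alpha> \<times> Zspace \<alpha>. S p \<in> Zspace \<alpha>)
      \<and> (\<forall>z\<in>Zspace \<alpha>. S (T z) = z)
      \<and> (\<forall>p\<in>Zspace \<alpha> \<times> Zspace \<alpha>. T (S p) = p)
      \<and> (\<forall>z\<in>Zspace \<alpha>. \<forall>w\<in>Zspace \<alpha>. \<forall>a b.
            T (zadd (zscale a z) (zscale b w)) =
              (zadd (zscale a (fst (T z))) (zscale b (fst (T w))),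
               zadd (zscale a (snd (T z))) (zscale b (snd (T w)))))
      \<and> (\<exists>C. \<forall>z\<in>Zspace \<alpha>.
            Znorm \<alpha> (fst (T z)) + Znorm \<alpha> (snd (T z)) \<le> C * Znorm \<alpha> z)
      \<and> (\<exists>C. \<forall>p\<in>Zspace \<alpha> \<times> Zspace \<alpha>.
            Znorm \<alpha> (S p) \<le> C * (Znorm \<alpha> (fst p) + Znorm \<alpha> (snd p))))"

end

(*
  Splitting a pair (x, y) into its even- and odd-indexed parts is a linear bijection from Z_alpha
  onto Z_alpha (+) Z_alpha whose inverse interleaves; what must be shown is that both maps are bounded.
  Restricting x to a subsequence changes Omega only through the normalising constant: the
  restriction of Omega(x) is Omega(x o g) computed with l2norm x in place of l2norm (x o g).
  As f_alpha is Lipschitz with constant |1 + i alpha|, moving that constant from M up to N shifts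
  the k-th coordinate by at most |1 + i alpha| ln (N / M) |x_k|, and M ln (N / M) <= N, so the
  error is bounded by |1 + i alpha| N in l_2.
*)
theory Submission
  imports Defs
begin

abbreviation f_alpha_lip :: "real \<Rightarrow> real" where
  "f_alpha_lip \<alpha> \<equiv> cmod (1 + \<i> * complex_of_real \<alpha>)"

lemma norm_f_alpha: "t \<ge> 0 \<Longrightarrow> cmod (f_alpha \<alpha> t) = t"
  unfolding f_alpha_def by (simp add: norm_powr_real_powr)

lemma f_alpha_lipschitz_pos:
  assumes "s > 0" and "t > 0"
  shows "cmod (f_alpha \<alpha> s - f_alpha \<alpha> t) \<le> f_alpha_lip \<alpha> * \<bar>s - t\<bar>"
proof -
  define w where "w = 1 + \<i> * complex_of_real \<alpha>"
  define S where "S = closed_segment (complex_of_real s) (complex_of_real t)"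
  have S_pos_real: "\<exists>r > 0. z = complex_of_real r" if "z \<in> S" for z
  proof -
    obtain r where r: "r \<in> closed_segment s t" "z = complex_of_real r"
      using \<open>z \<in> S\<close> unfolding S_def closed_segment_of_real by auto
    have "r > 0"
      using r(1) assms by (auto simp: closed_segment_eq_real_ivl split: if_splits)
    with r(2) show ?thesis by blast
  qed
  have "cmod (complex_of_real s powr w - complex_of_real t powr w)
        \<le> cmod w * cmod (complex_of_real s - complex_of_real t)"
  proof (rule field_differentiable_bound[where f' = "\<lambda>z. w * z powr (w - 1)"])
    show "convex S" "complex_of_real s \<in> S" "complex_of_real t \<in> S"
      unfolding S_def by auto
    fix z assume "z \<in> S"
    then obtain r where r: "r > 0" "z = complex_of_real r"
      using S_pos_real by blast
    then have "z \<notin> \<real>\<^sub>\<le>\<^sub>0"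
      by (auto simp: nonpos_Reals_def)
    then show "((\<lambda>z. z powr w) has_field_derivative w * z powr (w - 1)) (at z within S)"
      by (rule has_field_derivative_at_within[OF has_field_derivative_powr])
    have "cmod (z powr (w - 1)) = 1"
      using r by (simp add: norm_powr_real_powr w_def)
    then show "cmod (w * z powr (w - 1)) \<le> cmod w"
      by (simp add: norm_mult)
  qed
  then show ?thesis
    unfolding f_alpha_def w_def by (metis norm_of_real of_real_diff)
qed

lemma f_alpha_lipschitz:
  assumes "s \<ge> 0" and "t \<ge> 0"
  shows "cmod (f_alpha \<alpha> s - f_alpha \<alpha> t) \<le> f_alpha_lip \<alpha> * \<bar>s - t\<bar>"
proof (cases "s = 0 \<or> t = 0")
  case True
  have "f_alpha \<alpha> 0 = 0"
    by (simp add: f_alpha_def)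
  with True assms have "cmod (f_alpha \<alpha> s - f_alpha \<alpha> t) = \<bar>s - t\<bar>"
    by (auto simp: norm_f_alpha norm_minus_commute)
  moreover have "1 \<le> f_alpha_lip \<alpha>"
    using abs_Re_le_cmod[of "1 + \<i> * complex_of_real \<alpha>"] by simp
  ultimately show ?thesis
    by (simp add: mult_le_cancel_right1)
next
  case False
  with assms show ?thesis
    by (simp add: f_alpha_lipschitz_pos)
qed

definition l2_cball :: "real \<Rightarrow> cseq set" where
  "l2_cball B = {x. in_l2 x \<and> l2norm x \<le> B}"

lemma l2_cball_mono: "x \<in> l2_cball A \<Longrightarrow> A \<le> B \<Longrightarrow> x \<in> l2_cball B"
  unfolding l2_cball_def by auto

lemma mem_l2_cball_l2norm: "in_l2 x \<Longrightarrow> x \<in> l2_cball (l2norm x)"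
  unfolding l2_cball_def by simp

lemma L2_set_le_if_mem_l2_cball:
  assumes "x \<in> l2_cball B" and "finite F"
  shows "L2_set (\<lambda>k. cmod (x k)) F \<le> B"
proof -
  have "summable (\<lambda>k. (cmod (x k))\<^sup>2)" and "l2norm x \<le> B"
    using assms(1) by (auto simp: l2_cball_def in_l2_def)
  with assms(2) have "(\<Sum>k\<in>F. (cmod (x k))\<^sup>2) \<le> (\<Sum>k. (cmod (x k))\<^sup>2)"
    by (intro sum_le_suminf) auto
  then have "L2_set (\<lambda>k. cmod (x k)) F \<le> l2norm x"
    unfolding L2_set_def l2norm_def by simp
  with \<open>l2norm x \<le> B\<close> show ?thesis
    by linarith
qed

lemma l2_cball_radius_nonneg: "x \<in> l2_cball B \<Longrightarrow> 0 \<le> B"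
  using L2_set_le_if_mem_l2_cball[of x B "{}"] by simp

lemma mem_l2_cball_iff: "x \<in> l2_cball B \<longleftrightarrow> (\<forall>n. L2_set (\<lambda>k. cmod (x k)) {..<n} \<le> B)"
proof
  assume bound: "\<forall>n. L2_set (\<lambda>k. cmod (x k)) {..<n} \<le> B"
  then have "0 \<le> B"
    using spec[OF bound, of 0] by simp
  have partial: "(\<Sum>k<n. (cmod (x k))\<^sup>2) \<le> B\<^sup>2" for n
  proof -
    have "(\<Sum>k<n. (cmod (x k))\<^sup>2) = (L2_set (\<lambda>k. cmod (x k)) {..<n})\<^sup>2"
      unfolding L2_set_def by (simp add: sum_nonneg)
    also have "\<dots> \<le> B\<^sup>2"
      by (rule power_mono) (simp_all add: bound)
    finally show ?thesis .
  qed
  then have summable: "summable (\<lambda>k. (cmod (x k))\<^sup>2)"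
    by (intro summableI_nonneg_bounded) auto
  have "(\<Sum>k. (cmod (x k))\<^sup>2) \<le> B\<^sup>2"
    by (rule suminf_le_const[OF summable partial])
  then have "l2norm x \<le> B"
    unfolding l2norm_def using real_sqrt_le_mono \<open>0 \<le> B\<close> by fastforce
  with summable show "x \<in> l2_cball B"
    by (simp add: l2_cball_def in_l2_def)
qed (simp add: L2_set_le_if_mem_l2_cball)

lemma l2_cball_dominated:
  assumes "p \<in> l2_cball A" and "q \<in> l2_cball B"
    and "\<And>k. cmod (r k) \<le> cmod (p k) + cmod (q k)"
  shows "r \<in> l2_cball (A + B)"
  unfolding mem_l2_cball_iff
proof
  fix n
  have "L2_set (\<lambda>k. cmod (r k)) {..<n} \<le> L2_set (\<lambda>k. cmod (p k) + cmod (q k)) {..<n}"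
    by (rule L2_set_mono) (simp_all add: assms(3))
  also have "\<dots> \<le> L2_set (\<lambda>k. cmod (p k)) {..<n} + L2_set (\<lambda>k. cmod (q k)) {..<n}"
    by (rule L2_set_triangle_ineq)
  also have "\<dots> \<le> A + B"
    using assms(1,2) by (intro add_mono L2_set_le_if_mem_l2_cball) auto
  finally show "L2_set (\<lambda>k. cmod (r k)) {..<n} \<le> A + B" .
qed

lemma l2_cball_scaled:
  assumes "p \<in> l2_cball A" and "0 \<le> c" and "\<And>k. cmod (r k) \<le> c * cmod (p k)"
  shows "r \<in> l2_cball (c * A)"
  unfolding mem_l2_cball_iff
proof
  fix n
  have "L2_set (\<lambda>k. cmod (r k)) {..<n} \<le> L2_set (\<lambda>k. c * cmod (p k)) {..<n}"
    by (rule L2_set_mono) (simp_all add: assms(3))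
  also have "\<dots> = c * L2_set (\<lambda>k. cmod (p k)) {..<n}"
    using assms(2) by (simp add: L2_set_right_distrib)
  also have "\<dots> \<le> c * A"
    using assms(1,2) by (intro mult_left_mono L2_set_le_if_mem_l2_cball) auto
  finally show "L2_set (\<lambda>k. cmod (r k)) {..<n} \<le> c * A" .
qed

lemma l2_cball_reindex:
  assumes "x \<in> l2_cball B" and "inj g"
  shows "(\<lambda>k. x (g k)) \<in> l2_cball B"
  unfolding mem_l2_cball_iff
proof
  fix n
  have "L2_set (\<lambda>k. cmod (x (g k))) {..<n} = L2_set (\<lambda>k. cmod (x k)) (g ` {..<n})"
    using assms(2) by (simp add: L2_set_def sum.reindex inj_on_subset)
  also have "\<dots> \<le> B"
    using assms(1) by (simp add: L2_set_le_if_mem_l2_cball)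
  finally show "L2_set (\<lambda>k. cmod (x (g k))) {..<n} \<le> B" .
qed

lemma l2_cball_diff_triangle:
  assumes "(\<lambda>k. a k - b k) \<in> l2_cball A" and "(\<lambda>k. b k - c k) \<in> l2_cball B"
  shows "(\<lambda>k. a k - c k) \<in> l2_cball (A + B)"
  using assms by (rule l2_cball_dominated) (rule norm_diff_triangle_le[OF order_refl order_refl])

lemma l2_cball_minus_commute:
  assumes "(\<lambda>k. a k - b k) \<in> l2_cball B"
  shows "(\<lambda>k. b k - a k) \<in> l2_cball B"
  using l2_cball_scaled[OF assms, of 1] by (simp add: norm_minus_commute)

definition interleave :: "cseq \<Rightarrow> cseq \<Rightarrow> cseq" where
  "interleave p q = (\<lambda>k. if even k then p (k div 2) else q (k div 2))"

lemma interleave_even [simp]: "interleave p q (2 * k) = p k"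
  and interleave_odd [simp]: "interleave p q (Suc (2 * k)) = q k"
  by (simp_all add: interleave_def)

lemma interleave_even_odd: "interleave (\<lambda>k. x (2 * k)) (\<lambda>k. x (Suc (2 * k))) = x"
  by (rule ext) (simp add: interleave_def)

lemma sum_interleave:
  "(\<Sum>k<2 * n. f (interleave p q k)) = (\<Sum>k<n. f (p k)) + (\<Sum>k<n. f (q k))"
proof (induction n)
  case (Suc n)
  have "2 * Suc n = Suc (Suc (2 * n))"
    by simp
  with Suc show ?case
    by (simp add: interleave_def ac_simps)
qed simp

lemma l2_cball_interleave:
  assumes "p \<in> l2_cball A" and "q \<in> l2_cball B"
  shows "interleave p q \<in> l2_cball (A + B)"
  unfolding mem_l2_cball_iff
proof
  fix n :: nat
  let ?L = "\<lambda>x. L2_set (\<lambda>k. cmod (x k)) {..<n}"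
  have "L2_set (\<lambda>k. cmod (interleave p q k)) {..<n}
        \<le> L2_set (\<lambda>k. cmod (interleave p q k)) {..<2 * n}"
    unfolding L2_set_def by (intro real_sqrt_le_mono sum_mono2) (simp_all add: subset_eq)
  also have "\<dots> = sqrt ((?L p)\<^sup>2 + (?L q)\<^sup>2)"
    unfolding L2_set_def by (simp add: sum_interleave[of "\<lambda>z. (cmod z)\<^sup>2"] sum_nonneg)
  also have "\<dots> \<le> ?L p + ?L q"
    by (rule sqrt_sum_squares_le_sum) simp_all
  also have "\<dots> \<le> A + B"
    using assms by (intro add_mono L2_set_le_if_mem_l2_cball) auto
  finally show "L2_set (\<lambda>k. cmod (interleave p q k)) {..<n} \<le> A + B" .
qed

lemma mult_ln_div_le:
  fixes a b :: real
  assumes "0 \<le> a" and "a \<le> b"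
  shows "a * ln (b / a) \<le> b"
proof (cases "a = 0")
  case False
  with assms have "ln (b / a) \<le> b / a - 1"
    by (intro ln_le_minus_one) simp
  with assms have "a * ln (b / a) \<le> a * (b / a - 1)"
    by (intro mult_left_mono) auto
  also have "\<dots> = b - a"
    using False by (simp add: field_simps)
  finally show ?thesis
    using assms(1) by linarith
qed (use assms in simp)

definition Omega_at :: "real \<Rightarrow> real \<Rightarrow> cseq \<Rightarrow> cseq" where
  "Omega_at \<alpha> N x = (\<lambda>k. if x k = 0 then 0 else x k * f_alpha \<alpha> (ln (N / cmod (x k))))"

lemma Omega_eq_Omega_at: "Omega \<alpha> x = Omega_at \<alpha> (l2norm x) x"
  by (simp add: Omega_def Omega_at_def)

lemma Omega_reindex: "Omega \<alpha> x (g k) = Omega_at \<alpha> (l2norm x) (\<lambda>k. x (g k)) k"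
  by (simp add: Omega_def Omega_at_def)

lemma norm_Omega_at_diff_le:
  assumes "cmod (x k) \<le> M" and "M \<le> N"
  shows "cmod (Omega_at \<alpha> N x k - Omega_at \<alpha> M x k) \<le> f_alpha_lip \<alpha> * ln (N / M) * cmod (x k)"
proof (cases "x k = 0")
  case False
  define s t where "s = ln (N / cmod (x k))" and "t = ln (M / cmod (x k))"
  have "0 < cmod (x k)"
    using False by simp
  with assms have "0 < M"
    by linarith
  with \<open>0 < cmod (x k)\<close> assms have "0 \<le> t" "0 \<le> ln (N / M)"
    by (simp_all add: t_def)
  moreover have "s - t = ln (N / M)"
    using \<open>0 < M\<close> \<open>0 < cmod (x k)\<close> assms(2) by (simp add: s_def t_def ln_div)
  ultimately have "cmod (f_alpha \<alpha> s - f_alpha \<alpha> t) \<le> f_alpha_lip \<alpha> * ln (N / M)"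
    using f_alpha_lipschitz[of s t \<alpha>] by simp
  moreover have "Omega_at \<alpha> N x k - Omega_at \<alpha> M x k = x k * (f_alpha \<alpha> s - f_alpha \<alpha> t)"
    using False by (simp add: Omega_at_def s_def t_def right_diff_distrib)
  ultimately show ?thesis
    by (simp add: norm_mult mult_left_mono mult.commute)
qed (simp add: Omega_at_def)

lemma Omega_at_minus_Omega:
  assumes x: "in_l2 x" and N: "l2norm x \<le> N"
  shows "(\<lambda>k. Omega_at \<alpha> N x k - Omega \<alpha> x k) \<in> l2_cball (f_alpha_lip \<alpha> * N)"
proof -
  define K M where "K = f_alpha_lip \<alpha>" and "M = l2norm x"
  have x_ball: "x \<in> l2_cball M"
    unfolding M_def using x by (rule mem_l2_cball_l2norm)
  then have "0 \<le> M"
    by (rule l2_cball_radius_nonneg)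
  then have "0 \<le> K * ln (N / M)"
    using N by (cases "M = 0") (simp_all add: K_def M_def)
  moreover have "cmod (Omega_at \<alpha> N x k - Omega \<alpha> x k) \<le> K * ln (N / M) * cmod (x k)" for k
    using L2_set_le_if_mem_l2_cball[OF x_ball, of "{k}"] N
    unfolding Omega_eq_Omega_at K_def M_def by (intro norm_Omega_at_diff_le) simp_all
  ultimately have "(\<lambda>k. Omega_at \<alpha> N x k - Omega \<alpha> x k) \<in> l2_cball (K * ln (N / M) * M)"
    using x_ball by (intro l2_cball_scaled)
  moreover have "K * ln (N / M) * M \<le> K * N"
    using mult_left_mono[OF mult_ln_div_le[OF \<open>0 \<le> M\<close>, of N], of K] N
    by (simp add: K_def M_def ac_simps)
  ultimately show ?thesis
    unfolding K_def by (rule l2_cball_mono)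
qed

corollary Omega_reindex_minus_Omega:
  assumes "in_l2 x" and "inj g"
  shows "(\<lambda>k. Omega \<alpha> x (g k) - Omega \<alpha> (\<lambda>k. x (g k)) k)
    \<in> l2_cball (f_alpha_lip \<alpha> * l2norm x)"
proof -
  have "(\<lambda>k. x (g k)) \<in> l2_cball (l2norm x)"
    using assms by (simp add: l2_cball_reindex mem_l2_cball_l2norm)
  then have "in_l2 (\<lambda>k. x (g k))" "l2norm (\<lambda>k. x (g k)) \<le> l2norm x"
    by (simp_all add: l2_cball_def)
  then show ?thesis
    unfolding Omega_reindex[of \<alpha> x g] by (rule Omega_at_minus_Omega)
qed

lemma Zspace_Znorm_le_if_l2_cball:
  assumes "x \<in> l2_cball A" and "(\<lambda>k. y k - Omega \<alpha> x k) \<in> l2_cball B"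
  shows "(x, y) \<in> Zspace \<alpha>" and "Znorm \<alpha> (x, y) \<le> A + B"
  using assms by (auto simp: Zspace_def Znorm_def l2_cball_def)

definition zrestrict :: "(nat \<Rightarrow> nat) \<Rightarrow> cseq \<times> cseq \<Rightarrow> cseq \<times> cseq" where
  "zrestrict g z = ((\<lambda>k. fst z (g k)), (\<lambda>k. snd z (g k)))"

lemma zrestrict_zadd_zscale:
  "zrestrict g (zadd (zscale a z) (zscale b w)) = zadd (zscale a (zrestrict g z)) (zscale b (zrestrict g w))"
  by (simp add: zrestrict_def zadd_def zscale_def)

lemma zrestrict_Zspace:
  assumes "z \<in> Zspace \<alpha>" and "inj g"
  shows "zrestrict g z \<in> Zspace \<alpha>"
    and "Znorm \<alpha> (zrestrict g z) \<le> (1 + f_alpha_lip \<alpha>) * Znorm \<alpha> z"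
proof -
  obtain x y where z: "z = (x, y)"
    by fastforce
  define r where "r = (\<lambda>k. y k - Omega \<alpha> x k)"
  have "in_l2 x" "in_l2 r"
    using assms(1) by (simp_all add: z r_def Zspace_def)
  then have x: "x \<in> l2_cball (l2norm x)" and r: "r \<in> l2_cball (l2norm r)"
    by (simp_all add: mem_l2_cball_l2norm)
  have "(\<lambda>k. y (g k) - Omega \<alpha> x (g k)) \<in> l2_cball (l2norm r)"
    using l2_cball_reindex[OF r assms(2)] by (simp add: r_def)
  moreover have "(\<lambda>k. Omega \<alpha> x (g k) - Omega \<alpha> (\<lambda>k. x (g k)) k) \<in> l2_cball (f_alpha_lip \<alpha> * l2norm x)"
    using Omega_reindex_minus_Omega[OF \<open>in_l2 x\<close> assms(2)] .
  ultimately have "(\<lambda>k. y (g k) - Omega \<alpha> (\<lambda>k. x (g k)) k) \<in> l2_cball (l2norm r + f_alpha_lip \<alpha> * l2norm x)"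
    by (rule l2_cball_diff_triangle)
  note restricted = Zspace_Znorm_le_if_l2_cball[OF l2_cball_reindex[OF x assms(2)] this]
  then show "zrestrict g z \<in> Zspace \<alpha>"
    by (simp add: zrestrict_def z)
  have "l2norm x + (l2norm r + f_alpha_lip \<alpha> * l2norm x) \<le> (1 + f_alpha_lip \<alpha>) * Znorm \<alpha> z"
    using l2_cball_radius_nonneg[OF r] by (simp add: z Znorm_def r_def algebra_simps)
  with restricted show "Znorm \<alpha> (zrestrict g z) \<le> (1 + f_alpha_lip \<alpha>) * Znorm \<alpha> z"
    by (simp add: zrestrict_def z)
qed

definition zinterleave :: "cseq \<times> cseq \<Rightarrow> cseq \<times> cseq \<Rightarrow> cseq \<times> cseq" where
  "zinterleave z w = (interleave (fst z) (fst w), interleave (snd z) (snd w))"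

lemma zrestrict_zinterleave:
  "zrestrict (\<lambda>k. 2 * k) (zinterleave z w) = z" "zrestrict (\<lambda>k. Suc (2 * k)) (zinterleave z w) = w"
  by (simp_all add: zrestrict_def zinterleave_def)

lemma zinterleave_zrestrict: "zinterleave (zrestrict (\<lambda>k. 2 * k) z) (zrestrict (\<lambda>k. Suc (2 * k)) z) = z"
  by (simp add: zrestrict_def zinterleave_def interleave_even_odd)

lemma zinterleave_Zspace:
  assumes "z \<in> Zspace \<alpha>" and "w \<in> Zspace \<alpha>"
  shows "zinterleave z w \<in> Zspace \<alpha>"
    and "Znorm \<alpha> (zinterleave z w) \<le> (1 + 2 * f_alpha_lip \<alpha>) * (Znorm \<alpha> z + Znorm \<alpha> w)"
proof -
  obtain a b c d where z: "z = (a, b)" and w: "w = (c, d)"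
    by fastforce
  define x y where "x = interleave a c" and "y = interleave b d"
  define K where "K = f_alpha_lip \<alpha>"
  define rb rd where "rb = (\<lambda>k. b k - Omega \<alpha> a k)" and "rd = (\<lambda>k. d k - Omega \<alpha> c k)"
  have "in_l2 a" "in_l2 c" "in_l2 rb" "in_l2 rd"
    using assms by (simp_all add: z w rb_def rd_def Zspace_def)
  then have a: "a \<in> l2_cball (l2norm a)" and c: "c \<in> l2_cball (l2norm c)"
    and rb: "rb \<in> l2_cball (l2norm rb)" and rd: "rd \<in> l2_cball (l2norm rd)"
    by (simp_all add: mem_l2_cball_l2norm)
  have x: "x \<in> l2_cball (l2norm a + l2norm c)"
    unfolding x_def using a c by (rule l2_cball_interleave)
  then have "in_l2 x" and "l2norm x \<le> l2norm a + l2norm c"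
    by (simp_all add: l2_cball_def)
  have "(\<lambda>k. Omega \<alpha> a k - Omega \<alpha> x (2 * k)) \<in> l2_cball (K * l2norm x)"
    using l2_cball_minus_commute[OF Omega_reindex_minus_Omega[OF \<open>in_l2 x\<close>, of "\<lambda>k. 2 * k"]]
    by (simp add: x_def K_def inj_def)
  with rb have even: "(\<lambda>k. b k - Omega \<alpha> x (2 * k)) \<in> l2_cball (l2norm rb + K * l2norm x)"
    unfolding rb_def by (rule l2_cball_diff_triangle)
  have "(\<lambda>k. Omega \<alpha> c k - Omega \<alpha> x (Suc (2 * k))) \<in> l2_cball (K * l2norm x)"
    using l2_cball_minus_commute[OF Omega_reindex_minus_Omega[OF \<open>in_l2 x\<close>, of "\<lambda>k. Suc (2 * k)"]]
    by (simp add: x_def K_def inj_def)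
  with rd have odd: "(\<lambda>k. d k - Omega \<alpha> x (Suc (2 * k))) \<in> l2_cball (l2norm rd + K * l2norm x)"
    unfolding rd_def by (rule l2_cball_diff_triangle)
  have "(\<lambda>k. y k - Omega \<alpha> x k)
      = interleave (\<lambda>k. b k - Omega \<alpha> x (2 * k)) (\<lambda>k. d k - Omega \<alpha> x (Suc (2 * k)))"
    by (subst interleave_even_odd[symmetric]) (simp add: y_def)
  with l2_cball_interleave[OF even odd]
  have "(\<lambda>k. y k - Omega \<alpha> x k) \<in> l2_cball (l2norm rb + K * l2norm x + (l2norm rd + K * l2norm x))"
    by simp
  note merged = Zspace_Znorm_le_if_l2_cball[OF x this]
  then show "zinterleave z w \<in> Zspace \<alpha>"
    by (simp add: zinterleave_def z w x_def y_def)
  have "Znorm \<alpha> z = l2norm a + l2norm rb" "Znorm \<alpha> w = l2norm c + l2norm rd"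
    by (simp_all add: z w Znorm_def rb_def rd_def)
  moreover have "0 \<le> K * l2norm rb" "0 \<le> K * l2norm rd"
    using l2_cball_radius_nonneg[OF rb] l2_cball_radius_nonneg[OF rd] by (simp_all add: K_def)
  ultimately have "l2norm a + l2norm c + (l2norm rb + K * l2norm x + (l2norm rd + K * l2norm x))
      \<le> (1 + 2 * K) * (Znorm \<alpha> z + Znorm \<alpha> w)"
    using mult_left_mono[OF \<open>l2norm x \<le> l2norm a + l2norm c\<close>, of K] by (simp add: K_def algebra_simps)
  with merged show "Znorm \<alpha> (zinterleave z w) \<le> (1 + 2 * f_alpha_lip \<alpha>) * (Znorm \<alpha> z + Znorm \<alpha> w)"
    by (simp add: zinterleave_def z w x_def y_def K_def)
qed

theorem mainTheorem1:
  fixes \<alpha> :: real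
  shows "Z_cartesian \<alpha>"
proof -
  define T where "T z = (zrestrict (\<lambda>k. 2 * k) z, zrestrict (\<lambda>k. Suc (2 * k)) z)" for z
  define S where "S p = zinterleave (fst p) (snd p)" for p
  have inj: "inj (\<lambda>k::nat. 2 * k)" "inj (\<lambda>k::nat. Suc (2 * k))"
    by (auto simp: inj_def)
  have "Znorm \<alpha> (fst (T z)) + Znorm \<alpha> (snd (T z)) \<le> 2 * (1 + f_alpha_lip \<alpha>) * Znorm \<alpha> z"
    if "z \<in> Zspace \<alpha>" for z
    using zrestrict_Zspace(2)[OF that inj(1)] zrestrict_Zspace(2)[OF that inj(2)]
    by (simp add: T_def algebra_simps)
  moreover have "Znorm \<alpha> (S p) \<le> (1 + 2 * f_alpha_lip \<alpha>) * (Znorm \<alpha> (fst p) + Znorm \<alpha> (snd p))"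
    if "p \<in> Zspace \<alpha> \<times> Zspace \<alpha>" for p
    using that by (simp add: S_def mem_Times_iff zinterleave_Zspace(2))
  ultimately show ?thesis
    unfolding Z_cartesian_def
    by (intro exI[of _ T] exI[of _ S] conjI ballI allI exI)
      (simp_all add: T_def S_def mem_Times_iff zrestrict_zadd_zscale zrestrict_zinterleave
        zinterleave_zrestrict zrestrict_Zspace(1) zinterleave_Zspace(1) inj)
qed

end
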